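(* Let $L<U$ be integers and let $M$ be a counting query which, for every dataset $D$, outputs an integer $M(D)\in\{L,L+1,\dots,U\}$, and which has $\ell_1$-sensitivity $\Delta$ (a positive integer), i.e. $|M(D)-M(D')|\le\Delta$ for all neighboring datasets $D\sim D'$. Let $\epsilon>0$ and let $\epsilon'>0$ be a solution of $\epsilon'+\log g(\epsilon')=\epsilon$, where $$g(\epsilon')=\frac{1+\alpha'-(\alpha')^{d+1}-(\alpha')^{U-L+1-d}}{1-(\alpha')^{U-L+1}},\qquad d=\min\Big\{\Delta,\Big\lceil\tfrac{U-L}{2}\Big\rceil\Big\},\qquad \alpha'=e^{-\epsilon'/\Delta}.$$ The renormalized geometric mechanism outputs $\widetilde M_{\mathrm{RGM}}(D)=M(D)+\delta$, where $\delta$ is drawn from $$\Pr(\delta=k)=\frac{e^{-|k|\epsilon'/\Delta}}{\sum_{l=L-M(D)}^{U-M(D)}e^{-|l|\epsilon'/\Delta}},\qquad k=L-M(D),\,L-M(D)+1,\dots,U-M(D).$$ Then the renormalized geometric mechanism satisfies $\epsilon$-differential privacy.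
   Context: Datasets $D,D'$ with the same number $n$ of individuals are neighboring ($D\sim D'$) if they differ by substitution of a single individual's data. A randomized algorithm $\mathcal{A}$ satisfies $\epsilon$-differential privacy if for all neighboring $D,D'$ and every measurable set $S$ in its range, $\Pr(\mathcal{A}(D)\in S)\le e^{\epsilon}\Pr(\mathcal{A}(D')\in S)$. The $\ell_1$-sensitivity of $M$ is $\Delta(M)=\max_{D\sim D'}|M(D)-M(D')|$. *)

theory Defs
  imports "HOL-Probability.Probability"
begin

text \<open>Datasets of n individuals are lists of length n; neighbouring datasets have the
same length and differ (at most) in the entry of a single individual (substitution).\<close>
definition neighboring :: "'a list \<Rightarrow> 'a list \<Rightarrow> bool" where
  "neighboring D D' \<longleftrightarrow> length D = length D' \<and>
     (\<exists>i<length D. \<forall>j<length D. j \<noteq> i \<longrightarrow> D ! j = D' ! j)"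

text \<open>epsilon-differential privacy for a randomized algorithm with discrete (integer) output;
every set of outputs is measurable.\<close>
definition differentially_private :: "real \<Rightarrow> ('a list \<Rightarrow> 'b pmf) \<Rightarrow> bool" where
  "differentially_private \<epsilon> A \<longleftrightarrow>
     (\<forall>D D' S. neighboring D D' \<longrightarrow>
        measure_pmf.prob (A D) S \<le> exp \<epsilon> * measure_pmf.prob (A D') S)"

definition rgm_d :: "int \<Rightarrow> int \<Rightarrow> int \<Rightarrow> int" where
  "rgm_d L U \<Delta> = min \<Delta> \<lceil>real_of_int (U - L) / 2\<rceil>"

definition rgm_g :: "int \<Rightarrow> int \<Rightarrow> int \<Rightarrow> real \<Rightarrow> real" where
  "rgm_g L U \<Delta> \<epsilon>' =
     (let \<alpha> = exp (- \<epsilon>' / real_of_int \<Delta>); d = rgm_d L U \<Delta> in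
      (1 + \<alpha> - \<alpha> powr real_of_int (d + 1) - \<alpha> powr real_of_int (U - L + 1 - d))
      / (1 - \<alpha> powr real_of_int (U - L + 1)))"

definition rgm_noise :: "int \<Rightarrow> int \<Rightarrow> int \<Rightarrow> real \<Rightarrow> int \<Rightarrow> int pmf" where
  "rgm_noise L U \<Delta> \<epsilon>' m = embed_pmf (\<lambda>k.
     if L - m \<le> k \<and> k \<le> U - m then
       exp (- \<bar>real_of_int k\<bar> * \<epsilon>' / real_of_int \<Delta>) /
       (\<Sum>l\<in>{L - m..U - m}. exp (- \<bar>real_of_int l\<bar> * \<epsilon>' / real_of_int \<Delta>))
     else 0)"

definition rgm :: "int \<Rightarrow> int \<Rightarrow> int \<Rightarrow> real \<Rightarrow> ('a list \<Rightarrow> int) \<Rightarrow> 'a list \<Rightarrow> int pmf" where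
  "rgm L U \<Delta> \<epsilon>' M D = map_pmf (\<lambda>k. M D + k) (rgm_noise L U \<Delta> \<epsilon>' (M D))"

end

theory Submission
  imports Defs
begin

text \<open>
  Write \<alpha> = exp(-\<epsilon>'/\<Delta>), n = U - L and F(a) = 1 + \<alpha> - \<alpha>^(a+1) - \<alpha>^(n+1-a).
  When M(D) = L + a, the normaliser of the noise is F(a)/(1 - \<alpha>), and g = F(d)/F(0).
  Moving from M(D) to M(D') changes the numerator of a point probability by a factor of at
  most \<alpha>^(-\<Delta>) = exp \<epsilon>' and the normaliser by the factor F(a')/F(a). Since
  F(b) - F(a) = \<alpha>^(a+1) (1 - \<alpha>^(b-a)) (1 - \<alpha>^(n-a-b)), which is at most
  F(d) - F(0) whenever |b - a| \<le> \<Delta>, and F is smallest at a = 0, the ratio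
  F(a')/F(a) is at most g. So every point probability, and hence every event probability, grows
  by at most exp \<epsilon>' * g = exp \<epsilon>.
\<close>

text \<open>(1 - \<alpha>) times the total weight of \<alpha> powr |l| over the window -a \<le> l \<le> n - a,
  in closed form; see \<open>one_minus_mult_sum_powr_abs\<close>.\<close>
definition window_mass :: "real \<Rightarrow> real \<Rightarrow> real \<Rightarrow> real" where
  "window_mass \<alpha> n a = 1 + \<alpha> - \<alpha> powr (a + 1) - \<alpha> powr (n + 1 - a)"

lemma window_mass_reflect: "window_mass \<alpha> n (n - a) = window_mass \<alpha> n a"
  unfolding window_mass_def by (simp add: algebra_simps)

lemma window_mass_diff:
  "window_mass \<alpha> n (a + s) - window_mass \<alpha> n a =
     \<alpha> powr (a + 1) * (1 - \<alpha> powr s) * (1 - \<alpha> powr (n - 2 * a - s))"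
proof -
  have "\<alpha> powr (a + 1) * (1 - \<alpha> powr s) * (1 - \<alpha> powr (n - 2 * a - s)) =
        \<alpha> powr (a + 1) - \<alpha> powr ((a + 1) + s) - \<alpha> powr ((a + 1) + (n - 2 * a - s))
        + \<alpha> powr ((a + 1) + s + (n - 2 * a - s))"
    by (simp only: powr_add) (simp add: algebra_simps)
  also have "\<dots> = window_mass \<alpha> n (a + s) - window_mass \<alpha> n a"
    unfolding window_mass_def by (simp add: algebra_simps)
  finally show ?thesis ..
qed

lemma one_minus_mult_sum_powr:
  fixes k :: int
  assumes "0 < \<alpha>" "0 \<le> k"
  shows "(1 - \<alpha>) * (\<Sum>l\<in>{0..k}. \<alpha> powr l) = 1 - \<alpha> powr (k + 1)"
  using assms(2)
proof (induction k rule: int_ge_induct)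
  case base
  then show ?case using assms(1) by simp
next
  case (step k)
  have "{0..k + 1} = insert (k + 1) {0..k}"
    using step.hyps by auto
  then have "(\<Sum>l\<in>{0..k + 1}. \<alpha> powr l) = \<alpha> powr (k + 1) + (\<Sum>l\<in>{0..k}. \<alpha> powr l)"
    by simp
  then have "(1 - \<alpha>) * (\<Sum>l\<in>{0..k + 1}. \<alpha> powr l) =
      (1 - \<alpha>) * \<alpha> powr (k + 1) + (1 - \<alpha> powr (k + 1))"
    using step.IH by (simp add: distrib_left)
  also have "\<dots> = 1 - \<alpha> powr (k + 1 + 1)"
    using assms(1) by (simp add: powr_add power2_eq_square algebra_simps)
  finally show ?case by simp
qed

lemma one_minus_mult_sum_powr_abs:
  fixes a n :: int
  assumes "0 < \<alpha>" "0 \<le> a" "a \<le> n"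
  shows "(1 - \<alpha>) * (\<Sum>l\<in>{-a..n - a}. \<alpha> powr \<bar>real_of_int l\<bar>) = window_mass \<alpha> n a"
proof -
  let ?w = "\<lambda>l::int. \<alpha> powr \<bar>real_of_int l\<bar>"
  have "sum ?w {-a..n - a} + sum ?w {0} = sum ?w {-a..0} + sum ?w {0..n - a}"
    using sum.union_inter[of "{-a..0}" "{0..n - a}" ?w] assms
    by (simp add: ivl_disj_un_two_touch Int_atLeastAtMost max_def min_def)
  moreover have "sum ?w {-a..0} = sum ?w {0..a}"
    by (rule sum.reindex_bij_witness[of _ uminus uminus]) auto
  ultimately have split: "sum ?w {-a..n - a} = sum ?w {0..a} + sum ?w {0..n - a} - 1"
    using assms(1) by simp
  have nonneg_indices: "sum ?w {0..k} = (\<Sum>l\<in>{0..k}. \<alpha> powr l)" for k :: int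
    by (rule sum.cong) auto
  have "(1 - \<alpha>) * sum ?w {-a..n - a} =
      (1 - \<alpha>) * (\<Sum>l\<in>{0..a}. \<alpha> powr l) + (1 - \<alpha>) * (\<Sum>l\<in>{0..n - a}. \<alpha> powr l) - (1 - \<alpha>)"
    unfolding split nonneg_indices by (simp add: algebra_simps)
  also have "\<dots> = window_mass \<alpha> n a"
    using one_minus_mult_sum_powr[of \<alpha> a] one_minus_mult_sum_powr[of \<alpha> "n - a"] assms
    by (simp add: window_mass_def algebra_simps)
  finally show ?thesis .
qed

lemma ceiling_half_bounds:
  fixes n :: int
  shows "n \<le> 2 * \<lceil>real_of_int n / 2\<rceil>" "2 * \<lceil>real_of_int n / 2\<rceil> \<le> n + 1"
  by linarith+

context
  fixes \<alpha> :: real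
  assumes \<alpha>_pos: "0 < \<alpha>" and \<alpha>_less_1: "\<alpha> < 1"
begin

lemma powr_plus_powr_reflect_le:
  assumes "0 \<le> p" "p \<le> d" "d \<le> n - p"
  shows "\<alpha> powr d + \<alpha> powr (n - d) \<le> \<alpha> powr p + \<alpha> powr (n - p)"
proof -
  have "0 \<le> (\<alpha> powr p - \<alpha> powr (n - d)) * (1 - \<alpha> powr (d - p))"
    using assms \<alpha>_pos \<alpha>_less_1 by (intro mult_nonneg_nonneg) (auto intro: powr_mono' powr_le1)
  also have "\<dots> = \<alpha> powr p + \<alpha> powr (n - p) - (\<alpha> powr d + \<alpha> powr (n - d))"
    by (simp add: algebra_simps flip: powr_add)
  finally show ?thesis by simp
qed

lemma one_minus_powr_mult_le:
  assumes "0 \<le> s" "0 \<le> q" "s + q \<le> n" "min s q \<le> d" "d \<le> n - min s q"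
  shows "(1 - \<alpha> powr s) * (1 - \<alpha> powr q) \<le> (1 - \<alpha> powr d) * (1 - \<alpha> powr (n - d))"
proof -
  have "(1 - \<alpha> powr p) * (1 - \<alpha> powr r) \<le> (1 - \<alpha> powr d) * (1 - \<alpha> powr (n - d))"
    if "0 \<le> p" "p \<le> r" "r \<le> n - p" "p \<le> d" "d \<le> n - p" for p r
  proof -
    have "(1 - \<alpha> powr p) * (1 - \<alpha> powr r) \<le> (1 - \<alpha> powr p) * (1 - \<alpha> powr (n - p))"
      using that \<alpha>_pos \<alpha>_less_1 by (intro mult_left_mono) (auto intro: powr_mono' powr_le1)
    also have "\<dots> = 1 - (\<alpha> powr p + \<alpha> powr (n - p)) + \<alpha> powr n"
      by (simp add: algebra_simps flip: powr_add)
    also have "\<dots> \<le> 1 - (\<alpha> powr d + \<alpha> powr (n - d)) + \<alpha> powr n"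
      using powr_plus_powr_reflect_le[of p d n] that by simp
    also have "\<dots> = (1 - \<alpha> powr d) * (1 - \<alpha> powr (n - d))"
      by (simp add: algebra_simps flip: powr_add)
    finally show ?thesis .
  qed
  from this[of s q] this[of q s] assms show ?thesis
    by (cases "s \<le> q") (simp_all add: min_def mult.commute)
qed

lemma window_mass_0_pos: "0 \<le> n \<Longrightarrow> 0 < window_mass \<alpha> n 0"
  using powr_mono'[of 1 "n + 1" \<alpha>] \<alpha>_pos \<alpha>_less_1 by (simp add: window_mass_def)

lemma window_mass_0_le:
  assumes "0 \<le> a" "a \<le> n"
  shows "window_mass \<alpha> n 0 \<le> window_mass \<alpha> n a"
proof -
  have "0 \<le> \<alpha> powr (0 + 1) * (1 - \<alpha> powr a) * (1 - \<alpha> powr (n - 2 * 0 - a))"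
    using assms \<alpha>_pos \<alpha>_less_1 by (intro mult_nonneg_nonneg) (auto intro: powr_le1)
  then show ?thesis
    using window_mass_diff[of \<alpha> n 0 a] by simp
qed

lemma window_mass_increment_le:
  assumes "0 \<le> a" "a \<le> b" "0 \<le> d" "d \<le> n"
    and "min (b - a) (n - a - b) \<le> d" "d \<le> n - min (b - a) (n - a - b)"
  shows "window_mass \<alpha> n b - window_mass \<alpha> n a \<le> window_mass \<alpha> n d - window_mass \<alpha> n 0"
proof -
  define s q where "s = b - a" and "q = n - a - b"
  have step_b: "window_mass \<alpha> n b - window_mass \<alpha> n a =
      \<alpha> powr (a + 1) * ((1 - \<alpha> powr s) * (1 - \<alpha> powr q))"
    using window_mass_diff[of \<alpha> n a s] by (simp add: s_def q_def algebra_simps)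
  have step_d: "window_mass \<alpha> n d - window_mass \<alpha> n 0 =
      \<alpha> * ((1 - \<alpha> powr d) * (1 - \<alpha> powr (n - d)))"
    using window_mass_diff[of \<alpha> n 0 d] \<alpha>_pos by simp
  have s_nonneg: "0 \<le> 1 - \<alpha> powr s"
    using assms \<alpha>_pos \<alpha>_less_1 by (simp add: s_def powr_le1)
  have d_nonneg: "0 \<le> (1 - \<alpha> powr d) * (1 - \<alpha> powr (n - d))"
    using assms \<alpha>_pos \<alpha>_less_1 by (simp add: powr_le1)
  show ?thesis
  proof (cases "0 \<le> q")
    case False
    then have "1 - \<alpha> powr q \<le> 0"
      using powr_mono'[of q 0 \<alpha>] \<alpha>_pos \<alpha>_less_1 by simp
    then have "window_mass \<alpha> n b - window_mass \<alpha> n a \<le> 0"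
      unfolding step_b using s_nonneg by (simp add: mult_nonneg_nonpos)
    also have "0 \<le> window_mass \<alpha> n d - window_mass \<alpha> n 0"
      unfolding step_d using d_nonneg \<alpha>_pos by simp
    finally show ?thesis .
  next
    case True
    have factor_le: "\<alpha> powr (a + 1) \<le> \<alpha>"
      using powr_mono'[of 1 "a + 1" \<alpha>] assms \<alpha>_pos \<alpha>_less_1 by simp
    have product_nonneg: "0 \<le> (1 - \<alpha> powr s) * (1 - \<alpha> powr q)"
      using s_nonneg True \<alpha>_pos \<alpha>_less_1 by (simp add: powr_le1)
    have product_le:
      "(1 - \<alpha> powr s) * (1 - \<alpha> powr q) \<le> (1 - \<alpha> powr d) * (1 - \<alpha> powr (n - d))"
      using one_minus_powr_mult_le[of s q n d] assms True by (simp add: s_def q_def)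
    show ?thesis
      unfolding step_b step_d
      using mult_mono[OF factor_le product_le _ product_nonneg] \<alpha>_pos by simp
  qed
qed

lemma window_mass_ratio_le:
  fixes a b n \<Delta> d :: int
  assumes "0 \<le> a" "a \<le> n" "0 \<le> b" "b \<le> n" "\<bar>b - a\<bar> \<le> \<Delta>"
    and "d = min \<Delta> \<lceil>real_of_int n / 2\<rceil>"
  shows "window_mass \<alpha> n b * window_mass \<alpha> n 0 \<le> window_mass \<alpha> n d * window_mass \<alpha> n a"
proof -
  have d_bounds: "0 \<le> d" "2 * d \<le> n + 1"
    using assms ceiling_half_bounds[of n] by auto
  let ?F = "window_mass \<alpha> n"
  have increment: "?F b - ?F a \<le> ?F d - ?F 0"
    if "0 \<le> a" "a \<le> b" "b \<le> n" "b - a \<le> \<Delta>" for a b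
  proof -
    define p where "p = min (b - a) (n - a - b)"
    \<comment> \<open>from 2p \<le> n and 2d \<le> n + 1 by integrality\<close>
    have "p \<le> d" "p + d \<le> n"
      using that assms d_bounds ceiling_half_bounds[of n] by (auto simp: p_def)
    then show ?thesis
      using window_mass_increment_le[of a b d n] that d_bounds by (simp add: p_def)
  qed
  have le_increment: "?F b - ?F a \<le> ?F d - ?F 0"
  proof (cases "a \<le> b")
    case True
    then show ?thesis using increment[of a b] assms by simp
  next
    case False
    then show ?thesis
      using increment[of "n - a" "n - b"] assms
        window_mass_reflect[of \<alpha> n a] window_mass_reflect[of \<alpha> n b]
      by simp
  qed
  have F0_pos: "0 < ?F 0" and F0_le: "?F 0 \<le> ?F a" "?F 0 \<le> ?F d"
    using window_mass_0_pos window_mass_0_le assms d_bounds by auto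
  have "?F 0 * (?F b - ?F a) \<le> ?F a * (?F d - ?F 0)"
  proof (cases "?F b - ?F a \<le> 0")
    case True
    then have "?F 0 * (?F b - ?F a) \<le> 0"
      using F0_pos by (simp add: mult_nonneg_nonpos)
    also have "0 \<le> ?F a * (?F d - ?F 0)"
      using F0_pos F0_le by simp
    finally show ?thesis .
  next
    case False
    then show ?thesis
      using le_increment F0_pos F0_le by (intro mult_mono) auto
  qed
  then show ?thesis
    by (simp add: algebra_simps)
qed

end

lemma pmf_rgm_noise:
  assumes "L \<le> U"
  shows "pmf (rgm_noise L U \<Delta> \<epsilon>' m) k =
    (if k \<in> {L - m..U - m} then
       exp (- \<bar>real_of_int k\<bar> * \<epsilon>' / real_of_int \<Delta>) /
       (\<Sum>l\<in>{L - m..U - m}. exp (- \<bar>real_of_int l\<bar> * \<epsilon>' / real_of_int \<Delta>))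
     else 0)"
proof -
  let ?w = "\<lambda>l::int. exp (- \<bar>real_of_int l\<bar> * \<epsilon>' / real_of_int \<Delta>)"
  let ?Z = "sum ?w {L - m..U - m}"
  have Z_pos: "0 < ?Z"
    using assms by (intro sum_pos) auto
  have "(\<integral>\<^sup>+k. ennreal (if k \<in> {L - m..U - m} then ?w k / ?Z else 0) \<partial>count_space UNIV) =
      (\<Sum>k\<in>{L - m..U - m}. ennreal (?w k / ?Z))"
    by (subst nn_integral_count_space'[of "{L - m..U - m}"]) (auto intro!: sum.cong)
  also have "\<dots> = ennreal (\<Sum>k\<in>{L - m..U - m}. ?w k / ?Z)"
    using Z_pos by (subst sum_ennreal) auto
  also have "\<dots> = 1"
    using Z_pos by (simp flip: sum_divide_distrib)
  finally show ?thesis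
    unfolding rgm_noise_def using Z_pos by (subst pmf_embed_pmf) (auto simp: atLeastAtMost_iff)
qed

lemma pmf_rgm:
  fixes L U \<Delta> :: int
  assumes "0 < \<Delta>" "0 < \<epsilon>'" "L \<le> M D" "M D \<le> U"
  defines "\<alpha> \<equiv> exp (- \<epsilon>' / real_of_int \<Delta>)"
  shows "pmf (rgm L U \<Delta> \<epsilon>' M D) y =
    (if y \<in> {L..U}
     then (1 - \<alpha>) * \<alpha> powr \<bar>real_of_int (y - M D)\<bar> / window_mass \<alpha> (U - L) (M D - L)
     else 0)"
proof -
  have \<alpha>_bounds: "0 < \<alpha>" "\<alpha> < 1"
    using assms by (auto simp: \<alpha>_def)
  have weight: "exp (- \<bar>x\<bar> * \<epsilon>' / real_of_int \<Delta>) = \<alpha> powr \<bar>x\<bar>" for x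
    by (simp add: \<alpha>_def powr_def)
  have "{L - M D..U - M D} = {- (M D - L)..(U - L) - (M D - L)}"
    by auto
  then have "(1 - \<alpha>) * (\<Sum>l\<in>{L - M D..U - M D}. \<alpha> powr \<bar>real_of_int l\<bar>) =
      window_mass \<alpha> (U - L) (M D - L)"
    using one_minus_mult_sum_powr_abs[of \<alpha> "M D - L" "U - L"] \<alpha>_bounds assms by simp
  then have normaliser: "(\<Sum>l\<in>{L - M D..U - M D}. \<alpha> powr \<bar>real_of_int l\<bar>) =
      window_mass \<alpha> (U - L) (M D - L) / (1 - \<alpha>)"
    using \<alpha>_bounds by (simp add: eq_divide_eq mult.commute)
  have "pmf (rgm L U \<Delta> \<epsilon>' M D) (M D + (y - M D)) =
      pmf (rgm_noise L U \<Delta> \<epsilon>' (M D)) (y - M D)"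
    unfolding rgm_def by (rule pmf_map_inj') (simp add: inj_def)
  also have "\<dots> = (if y \<in> {L..U} then \<alpha> powr \<bar>real_of_int (y - M D)\<bar> /
      (\<Sum>l\<in>{L - M D..U - M D}. \<alpha> powr \<bar>real_of_int l\<bar>) else 0)"
    using assms(3,4) by (simp only: pmf_rgm_noise weight) auto
  finally show ?thesis
    using \<alpha>_bounds by (simp add: normaliser)
qed

lemma rgm_g_eq_window_mass:
  fixes L U \<Delta> :: int and \<epsilon>' :: real
  defines "\<alpha> \<equiv> exp (- \<epsilon>' / real_of_int \<Delta>)"
  shows "rgm_g L U \<Delta> \<epsilon>' = window_mass \<alpha> (U - L) (rgm_d L U \<Delta>) / window_mass \<alpha> (U - L) 0"
  unfolding rgm_g_def Let_def window_mass_def \<alpha>_def by (simp add: algebra_simps)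

lemma rgm_d_bounds:
  assumes "0 < \<Delta>" "L \<le> U"
  shows "0 \<le> rgm_d L U \<Delta>" "rgm_d L U \<Delta> \<le> U - L"
proof -
  note half = ceiling_half_bounds[of "U - L"]
  show "0 \<le> rgm_d L U \<Delta>"
    using assms half unfolding rgm_d_def by linarith
  show "rgm_d L U \<Delta> \<le> U - L"
    using assms half unfolding rgm_d_def by linarith
qed

lemma rgm_g_ge_1:
  assumes "0 < \<Delta>" "0 < \<epsilon>'" "L \<le> U"
  shows "1 \<le> rgm_g L U \<Delta> \<epsilon>'"
proof -
  define \<alpha> where "\<alpha> = exp (- \<epsilon>' / real_of_int \<Delta>)"
  have "0 < \<alpha>" "\<alpha> < 1"
    using assms by (auto simp: \<alpha>_def)
  then have "0 < window_mass \<alpha> (U - L) 0"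
    and "window_mass \<alpha> (U - L) 0 \<le> window_mass \<alpha> (U - L) (rgm_d L U \<Delta>)"
    using window_mass_0_pos window_mass_0_le rgm_d_bounds[OF assms(1,3)] assms(3) by auto
  then show ?thesis
    unfolding rgm_g_eq_window_mass \<alpha>_def[symmetric] by simp
qed

lemma pmf_rgm_le:
  fixes L U \<Delta> :: int
  assumes "0 < \<Delta>" "0 < \<epsilon>'" "L \<le> M D" "M D \<le> U" "L \<le> M D'" "M D' \<le> U"
    and "\<bar>M D - M D'\<bar> \<le> \<Delta>"
  shows "pmf (rgm L U \<Delta> \<epsilon>' M D) y \<le>
    exp \<epsilon>' * rgm_g L U \<Delta> \<epsilon>' * pmf (rgm L U \<Delta> \<epsilon>' M D') y"
proof (cases "y \<in> {L..U}")
  case False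
  then show ?thesis
    using pmf_rgm[where M = M and D = D, OF assms(1-4)]
      pmf_rgm[where M = M and D = D', OF assms(1,2,5,6)]
    by auto
next
  case True
  define \<alpha> where "\<alpha> = exp (- \<epsilon>' / real_of_int \<Delta>)"
  define F where "F = window_mass \<alpha> (U - L)"
  define w w' where "w = \<alpha> powr \<bar>real_of_int (y - M D)\<bar>"
    and "w' = \<alpha> powr \<bar>real_of_int (y - M D')\<bar>"
  have \<alpha>_bounds: "0 < \<alpha>" "\<alpha> < 1"
    using assms by (auto simp: \<alpha>_def)
  have F0_pos: "0 < F 0"
    unfolding F_def using window_mass_0_pos[OF \<alpha>_bounds] assms by simp
  moreover have "F 0 \<le> F (M D - L)" "F 0 \<le> F (M D' - L)"
    unfolding F_def using window_mass_0_le[OF \<alpha>_bounds] assms by simp_all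
  ultimately have F_pos: "0 < F (M D - L)" "0 < F (M D' - L)"
    by linarith+
  have g_eq: "rgm_g L U \<Delta> \<epsilon>' = F (rgm_d L U \<Delta>) / F 0"
    unfolding F_def \<alpha>_def by (rule rgm_g_eq_window_mass)
  have \<alpha>_powr_\<Delta>: "\<alpha> powr \<Delta> = exp (- \<epsilon>')"
    unfolding \<alpha>_def powr_def using assms(1) by simp
  have "w \<le> \<alpha> powr (\<bar>real_of_int (y - M D')\<bar> - \<Delta>)"
    unfolding w_def using assms(7) \<alpha>_bounds by (intro powr_mono') auto
  also have "\<dots> = exp \<epsilon>' * w'"
    by (simp add: powr_diff \<alpha>_powr_\<Delta> w'_def exp_minus divide_inverse)
  finally have shift: "w \<le> exp \<epsilon>' * w'" .
  have "F (M D' - L) * F 0 \<le> F (rgm_d L U \<Delta>) * F (M D - L)"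
    unfolding F_def using assms \<alpha>_bounds
    by (intro window_mass_ratio_le) (auto simp: rgm_d_def)
  then have ratio: "1 / F (M D - L) \<le> rgm_g L U \<Delta> \<epsilon>' / F (M D' - L)"
    using F_pos F0_pos by (simp add: g_eq field_simps)
  have "pmf (rgm L U \<Delta> \<epsilon>' M D) y = (1 - \<alpha>) * w * (1 / F (M D - L))"
    using True
    unfolding pmf_rgm[where M = M and D = D, OF assms(1-4)]
      \<alpha>_def[symmetric] F_def[symmetric] w_def[symmetric]
    by simp
  also have "\<dots> \<le> (1 - \<alpha>) * (exp \<epsilon>' * w') * (rgm_g L U \<Delta> \<epsilon>' / F (M D' - L))"
    using shift ratio \<alpha>_bounds F_pos by (intro mult_mono mult_left_mono) (auto simp: w_def w'_def)
  also have "\<dots> = exp \<epsilon>' * rgm_g L U \<Delta> \<epsilon>' * pmf (rgm L U \<Delta> \<epsilon>' M D') y"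
    using True
    unfolding pmf_rgm[where M = M and D = D', OF assms(1,2,5,6)]
      \<alpha>_def[symmetric] F_def[symmetric] w'_def[symmetric]
    by simp
  finally show ?thesis .
qed

lemma measure_pmf_prob_le_of_pmf_le:
  assumes "\<And>y. pmf p y \<le> C * pmf q y"
  shows "measure_pmf.prob p S \<le> C * measure_pmf.prob q S"
proof -
  have "measure_pmf.prob p S = infsetsum (pmf p) S"
    by (rule measure_pmf_conv_infsetsum)
  also have "\<dots> \<le> infsetsum (\<lambda>y. C * pmf q y) S"
    using assms by (intro infsetsum_mono) auto
  also have "\<dots> = C * measure_pmf.prob q S"
    by (subst infsetsum_cmult_right) (auto simp: measure_pmf_conv_infsetsum)
  finally show ?thesis .
qed

theorem theoremS1:
  fixes L U \<Delta> :: int and M :: "'a list \<Rightarrow> int" and \<epsilon> \<epsilon>' :: real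
  assumes "L < U"
    and "\<And>D. L \<le> M D \<and> M D \<le> U"
    and "\<Delta> > 0"
    and "\<And>D D'. neighboring D D' \<Longrightarrow> \<bar>M D - M D'\<bar> \<le> \<Delta>"
    and "\<epsilon> > 0" and "\<epsilon>' > 0"
    and "\<epsilon>' + ln (rgm_g L U \<Delta> \<epsilon>') = \<epsilon>"
  shows "differentially_private \<epsilon> (rgm L U \<Delta> \<epsilon>' M)"
  unfolding differentially_private_def
proof (intro allI impI)
  fix D D' :: "'a list" and S :: "int set"
  assume "neighboring D D'"
  have "exp \<epsilon> = exp \<epsilon>' * rgm_g L U \<Delta> \<epsilon>'"
    using rgm_g_ge_1[of \<Delta> \<epsilon>' L U] assms(1,3,6) unfolding assms(7)[symmetric] exp_add by simp
  moreover have "pmf (rgm L U \<Delta> \<epsilon>' M D) y \<le>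
      exp \<epsilon>' * rgm_g L U \<Delta> \<epsilon>' * pmf (rgm L U \<Delta> \<epsilon>' M D') y" for y
    using pmf_rgm_le assms(2,3,6) assms(4)[OF \<open>neighboring D D'\<close>] by blast
  ultimately show "measure_pmf.prob (rgm L U \<Delta> \<epsilon>' M D) S \<le>
      exp \<epsilon> * measure_pmf.prob (rgm L U \<Delta> \<epsilon>' M D') S"
    by (simp add: measure_pmf_prob_le_of_pmf_le)
qed

end
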